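(* Let $n\ge 4$, $\bar K>0$, and let $M$ be an $n$-dimensional submanifold of $\mathbb{S}^{n+p}(1/\sqrt{\bar K})$ satisfying $|\mathring A|^2<\mathring a(|H|^2)-\epsilon\omega$ for some $\epsilon>0$, where $\omega=\frac{|H|^2}{n-1}+2n\bar K$. Then the Ricci curvature of $M$ satisfies $\operatorname{Ric}_M\ge\frac{n-1}{n}\epsilon\,\omega>\frac{\epsilon}{n}|H|^2$.
   Context: $A$ is the second fundamental form, $H$ the mean curvature vector, $\mathring A=A-\frac Hn g$. For $x\ge0$: $a(x)=\sqrt{\big(\frac{x}{n-1}+2\bar K\big)^2+(2n-4)\bar K^2}$, $\mathring a(x)=a(x)-\frac xn$. *)

theory Defs
  imports Complex_Main
begin

text \<open>Pointwise data of an n-dimensional submanifold M of the sphere of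
curvature Kb in R^(n+p+1).  At a point, with respect to an orthonormal tangent
frame e_0..e_(n-1) and an orthonormal normal frame nu_0..nu_(p-1), the second
fundamental form is given by its components h a i j = <A(e_i,e_j), nu_a>.\<close>

definition meanCurv :: "nat \<Rightarrow> (nat \<Rightarrow> nat \<Rightarrow> nat \<Rightarrow> real) \<Rightarrow> nat \<Rightarrow> real" where
  "meanCurv n h a = (\<Sum>i<n. h a i i)"

definition normH2 :: "nat \<Rightarrow> nat \<Rightarrow> (nat \<Rightarrow> nat \<Rightarrow> nat \<Rightarrow> real) \<Rightarrow> real" where
  "normH2 n p h = (\<Sum>a<p. (meanCurv n h a)\<^sup>2)"

definition traceless :: "nat \<Rightarrow> (nat \<Rightarrow> nat \<Rightarrow> nat \<Rightarrow> real) \<Rightarrow> nat \<Rightarrow> nat \<Rightarrow> nat \<Rightarrow> real" where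
  "traceless n h a i j = h a i j - (if i = j then meanCurv n h a / real n else 0)"

definition normAo2 :: "nat \<Rightarrow> nat \<Rightarrow> (nat \<Rightarrow> nat \<Rightarrow> nat \<Rightarrow> real) \<Rightarrow> real" where
  "normAo2 n p h = (\<Sum>a<p. \<Sum>i<n. \<Sum>j<n. (traceless n h a i j)\<^sup>2)"

text \<open>Riemann curvature tensor of M via the Gauss equation for a submanifold
of the space form of constant curvature Kb.\<close>
definition riemGauss :: "nat \<Rightarrow> real \<Rightarrow> (nat \<Rightarrow> nat \<Rightarrow> nat \<Rightarrow> real) \<Rightarrow> nat \<Rightarrow> nat \<Rightarrow> nat \<Rightarrow> nat \<Rightarrow> real" where
  "riemGauss p Kb h i j k l =
     Kb * ((if i = k then 1 else 0) * (if j = l then 1 else 0)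
           - (if i = l then 1 else 0) * (if j = k then 1 else 0))
     + (\<Sum>a<p. h a i k * h a j l - h a i l * h a j k)"

definition ricci :: "nat \<Rightarrow> nat \<Rightarrow> real \<Rightarrow> (nat \<Rightarrow> nat \<Rightarrow> nat \<Rightarrow> real) \<Rightarrow> (nat \<Rightarrow> real) \<Rightarrow> real" where
  "ricci n p Kb h v = (\<Sum>j<n. \<Sum>i<n. \<Sum>k<n. v i * v k * riemGauss p Kb h i j k j)"

definition vnorm2 :: "nat \<Rightarrow> (nat \<Rightarrow> real) \<Rightarrow> real" where
  "vnorm2 n v = (\<Sum>i<n. (v i)\<^sup>2)"

definition aFun :: "nat \<Rightarrow> real \<Rightarrow> real \<Rightarrow> real" where
  "aFun n Kb x = sqrt ((x / (real n - 1) + 2 * Kb)\<^sup>2 + (2 * real n - 4) * Kb\<^sup>2)"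

definition aoFun :: "nat \<Rightarrow> real \<Rightarrow> real \<Rightarrow> real" where
  "aoFun n Kb x = aFun n Kb x - x / real n"

definition omegaFun :: "nat \<Rightarrow> real \<Rightarrow> real \<Rightarrow> real" where
  "omegaFun n Kb x = x / (real n - 1) + 2 * real n * Kb"

end

theory Submission
  imports Defs "HOL-Analysis.Convex"
begin

text \<open>By the Gauss equation, writing A_a = B_a + (H_a/n) I with B_a traceless, for a
tangent vector v
  Ric(v,v) = (n-1) Kb |v|^2 + sum_a ((n-1)/n^2 H_a^2 |v|^2 + (n-2)/n H_a <B_a v,v> - |B_a v|^2).
For a traceless symmetric matrix B one has |Bv|^2 <= (n-1)/n |v|^2 |B|^2 and
<Bv,v>^2 <= (n-1)/n |v|^4 |B|^2. With Cauchy-Schwarz over a this yields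
  Ric(v,v) >= (n-1)/n |v|^2 (n Kb + |H|^2/n - (n-2)/sqrt(n(n-1)) |H| |Ao| - |Ao|^2),
and an elementary estimate on a(x) shows that the pinching hypothesis makes the
bracket at least eps * omega.\<close>

definition dot :: "nat \<Rightarrow> (nat \<Rightarrow> real) \<Rightarrow> (nat \<Rightarrow> real) \<Rightarrow> real" where
  "dot n u w = (\<Sum>i<n. u i * w i)"

definition mat_vec :: "nat \<Rightarrow> (nat \<Rightarrow> nat \<Rightarrow> real) \<Rightarrow> (nat \<Rightarrow> real) \<Rightarrow> nat \<Rightarrow> real" where
  "mat_vec n B v i = (\<Sum>j<n. B i j * v j)"

definition frob_inner :: "nat \<Rightarrow> (nat \<Rightarrow> nat \<Rightarrow> real) \<Rightarrow> (nat \<Rightarrow> nat \<Rightarrow> real) \<Rightarrow> real" where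
  "frob_inner n B C = (\<Sum>i<n. \<Sum>j<n. B i j * C i j)"

lemma dot_self_nonneg: "dot n v v \<ge> 0"
  by (simp add: dot_def sum_nonneg)

lemma frob_inner_self_nonneg: "frob_inner n B B \<ge> 0"
  by (simp add: frob_inner_def sum_nonneg)

lemma dot_self_eq_0_iff: "dot n v v = 0 \<longleftrightarrow> (\<forall>i<n. v i = 0)"
  by (auto simp: dot_def sum_nonneg_eq_0_iff)

lemma dot_Cauchy_Schwarz: "(dot n u w)\<^sup>2 \<le> dot n u u * dot n w w"
  using Cauchy_Schwarz_ineq_sum[of u w "{..<n}"] by (simp add: dot_def power2_eq_square)

definition perp_proj :: "nat \<Rightarrow> (nat \<Rightarrow> real) \<Rightarrow> nat \<Rightarrow> nat \<Rightarrow> real" where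
  "perp_proj n v i j = dot n v v * (if i = j then 1 else 0) - v i * v j"

text \<open>compress B v = P B P for P = perp_proj v = |v|^2 I - v v^T.\<close>

definition compress :: "nat \<Rightarrow> (nat \<Rightarrow> nat \<Rightarrow> real) \<Rightarrow> (nat \<Rightarrow> real) \<Rightarrow> nat \<Rightarrow> nat \<Rightarrow> real" where
  "compress n B v i j = (dot n v v)\<^sup>2 * B i j
     - dot n v v * (mat_vec n B v i * v j + v i * mat_vec n B v j)
     + dot n v (mat_vec n B v) * v i * v j"

lemma mat_vec_compress_eq_0: "mat_vec n (compress n B v) v i = 0"
proof -
  define r w s where "r = dot n v v" and "w = mat_vec n B v" and "s = dot n v w"
  have "mat_vec n (compress n B v) v i
      = r\<^sup>2 * (\<Sum>j<n. B i j * v j) - r * w i * (\<Sum>j<n. v j * v j)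
        - r * v i * (\<Sum>j<n. v j * w j) + s * v i * (\<Sum>j<n. v j * v j)"
    unfolding mat_vec_def[of n "compress n B v"] compress_def
      r_def[symmetric] w_def[symmetric] s_def[symmetric]
    by (simp add: algebra_simps sum.distrib sum_subtractf sum_distrib_left)
  also have "\<dots> = 0"
    by (simp add: r_def w_def s_def dot_def flip: mat_vec_def) (simp add: power2_eq_square)
  finally show ?thesis .
qed

lemma compress_sym:
  assumes "\<And>i j. B i j = B j i"
  shows "compress n B v i j = compress n B v j i"
  by (simp add: compress_def assms algebra_simps)

lemma frob_inner_compress_mat:
  assumes sym: "\<And>i j. B i j = B j i"
  shows "frob_inner n (compress n B v) B = (dot n v v)\<^sup>2 * frob_inner n B B
           - 2 * dot n v v * dot n (mat_vec n B v) (mat_vec n B v) + (dot n v (mat_vec n B v))\<^sup>2"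
proof -
  define r w s q where "r = dot n v v" and "w = mat_vec n B v"
    and "s = dot n v w" and "q = dot n w w"
  have hw: "(\<Sum>j<n. B i j * v j) = w i" for i by (simp add: w_def mat_vec_def)
  have wv: "(\<Sum>i<n. \<Sum>j<n. w i * v j * B i j) = q"
    by (simp add: q_def dot_def hw[symmetric] sum_distrib_left mult_ac)
  have vw: "(\<Sum>i<n. \<Sum>j<n. v i * w j * B i j) = q"
  proof -
    have "(\<Sum>i<n. \<Sum>j<n. v i * w j * B i j) = (\<Sum>j<n. \<Sum>i<n. w j * (B j i * v i))"
      by (subst sum.swap) (simp add: sym[of _ j for j] mult_ac)
    also have "\<dots> = q" by (simp add: q_def dot_def hw sum_distrib_left[symmetric])
    finally show ?thesis .
  qed
  have vv: "(\<Sum>i<n. \<Sum>j<n. v i * v j * B i j) = s"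
    by (simp add: s_def dot_def hw[symmetric] sum_distrib_left mult_ac)
  have "frob_inner n (compress n B v) B = r\<^sup>2 * frob_inner n B B
      - r * (\<Sum>i<n. \<Sum>j<n. w i * v j * B i j) - r * (\<Sum>i<n. \<Sum>j<n. v i * w j * B i j)
      + s * (\<Sum>i<n. \<Sum>j<n. v i * v j * B i j)"
    unfolding frob_inner_def compress_def r_def[symmetric] w_def[symmetric] s_def[symmetric]
    by (simp add: algebra_simps sum.distrib sum_subtractf sum_distrib_left)
  then show ?thesis
    unfolding wv vw vv by (simp add: r_def w_def s_def q_def power2_eq_square)
qed

lemma frob_inner_compress_self:
  assumes sym: "\<And>i j. B i j = B j i"
  shows "frob_inner n (compress n B v) (compress n B v)
           = (dot n v v)\<^sup>2 * frob_inner n (compress n B v) B"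
proof -
  define D r w s where "D = compress n B v" and "r = dot n v v" and "w = mat_vec n B v"
    and "s = dot n v w"
  have Dv: "(\<Sum>j<n. D i j * v j) = 0" for i
    using mat_vec_compress_eq_0[of n B v i] by (simp add: D_def mat_vec_def)
  have Dv': "(\<Sum>i<n. D i j * v i) = 0" for j
    using Dv[of j] compress_sym[OF sym] by (simp add: D_def)
  have e: "D i j * D i j = r\<^sup>2 * (D i j * B i j) - r * (w i * (D i j * v j))
      - r * (w j * (D i j * v i)) + s * (v i * (D i j * v j))" for i j
    by (simp add: D_def compress_def r_def w_def s_def algebra_simps)
  have "frob_inner n D D = r\<^sup>2 * frob_inner n D B
      - r * (\<Sum>i<n. w i * (\<Sum>j<n. D i j * v j)) - r * (\<Sum>i<n. \<Sum>j<n. w j * (D i j * v i))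
      + s * (\<Sum>i<n. v i * (\<Sum>j<n. D i j * v j))"
    unfolding frob_inner_def e by (simp add: sum.distrib sum_subtractf sum_distrib_left)
  moreover have "(\<Sum>i<n. \<Sum>j<n. w j * (D i j * v i)) = 0"
    by (subst sum.swap) (simp add: sum_distrib_left[symmetric] Dv')
  ultimately have "frob_inner n D D = r\<^sup>2 * frob_inner n D B" by (simp add: Dv)
  then show ?thesis by (simp add: D_def r_def)
qed

lemma frob_inner_compress_perp_proj:
  assumes tr: "(\<Sum>i<n. B i i) = 0"
  shows "frob_inner n (compress n B v) (perp_proj n v) = - (dot n v v)\<^sup>2 * dot n v (mat_vec n B v)"
proof -
  define D r s where "D = compress n B v" and "r = dot n v v" and "s = dot n v (mat_vec n B v)"
  have Dv: "(\<Sum>j<n. D i j * v j) = 0" for i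
    using mat_vec_compress_eq_0[of n B v i] by (simp add: D_def mat_vec_def)
  have trD: "(\<Sum>i<n. D i i) = - r * s"
  proof -
    have "(\<Sum>i<n. D i i) = r\<^sup>2 * (\<Sum>i<n. B i i)
        - 2 * r * (\<Sum>i<n. v i * mat_vec n B v i) + s * (\<Sum>i<n. v i * v i)"
      unfolding D_def compress_def r_def[symmetric] s_def[symmetric]
      by (simp add: algebra_simps sum.distrib sum_subtractf sum_distrib_left)
    then show ?thesis using tr by (simp add: r_def s_def dot_def power2_eq_square)
  qed
  have e: "D i j * perp_proj n v i j = r * (if i = j then D i j else 0) - v i * (D i j * v j)" for i j
    by (simp add: perp_proj_def r_def algebra_simps)
  have "frob_inner n D (perp_proj n v) = r * (\<Sum>i<n. D i i) - (\<Sum>i<n. v i * (\<Sum>j<n. D i j * v j))"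
    unfolding frob_inner_def e
    by (simp add: sum_subtractf sum_distrib_left if_distrib[of "(*) r"] cong: if_cong)
  also have "\<dots> = - r\<^sup>2 * s" by (simp add: trD Dv power2_eq_square)
  finally show ?thesis by (simp add: D_def r_def s_def)
qed

lemma frob_inner_perp_proj_self:
  "frob_inner n (perp_proj n v) (perp_proj n v) = (real n - 1) * (dot n v v)\<^sup>2"
proof -
  define r where "r = dot n v v"
  have e: "perp_proj n v i j * perp_proj n v i j = r * r * (if i = j then 1 else 0)
      - 2 * r * (if i = j then v i * v j else 0) + (v i * v i) * (v j * v j)" for i j
    by (simp add: perp_proj_def r_def algebra_simps)
  have "frob_inner n (perp_proj n v) (perp_proj n v)
      = r * r * real n - 2 * r * (\<Sum>i<n. v i * v i) + (\<Sum>i<n. v i * v i) * (\<Sum>j<n. v j * v j)"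
    unfolding frob_inner_def e
    by (simp add: sum.distrib sum_subtractf sum_distrib_left sum_distrib_right
        if_distrib[of "(*) (r * r)"] if_distrib[of "(*) (2 * r)"] cong: if_cong) (simp add: mult.commute)
  then show ?thesis by (simp add: r_def dot_def power2_eq_square algebra_simps)
qed

lemma sym_traceless_mat_vec_ineq:
  assumes sym: "\<And>i j. B i j = B j i" and tr: "(\<Sum>i<n. B i i) = 0" and n: "n \<ge> 2"
  shows "2 * dot n v v * dot n (mat_vec n B v) (mat_vec n B v)
           \<le> (dot n v v)\<^sup>2 * frob_inner n B B
             + (real n - 2) / (real n - 1) * (dot n v (mat_vec n B v))\<^sup>2"
    (is "2 * ?r * ?q \<le> ?r\<^sup>2 * ?N + _ * ?s\<^sup>2")
proof (cases "?r = 0")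
  case True
  then show ?thesis using n frob_inner_self_nonneg[of n B] by simp
next
  case False
  then have r: "?r > 0" using dot_self_nonneg[of n v] by simp
  have n1: "real n - 1 > 0" using n by simp
  \<comment> \<open>this c minimises the quadratic in c obtained below\<close>
  define D P c where "D = compress n B v" and "P = perp_proj n v" and "c = ?s / (real n - 1)"
  have "0 \<le> (\<Sum>i<n. \<Sum>j<n. (D i j + c * P i j) * (D i j + c * P i j))"
    by (intro sum_nonneg) simp
  also have "\<dots> = frob_inner n D D + 2 * c * frob_inner n D P + c\<^sup>2 * frob_inner n P P"
    by (simp add: frob_inner_def algebra_simps sum.distrib sum_distrib_left power2_eq_square)
  also have "\<dots> = ?r\<^sup>2 * (?r\<^sup>2 * ?N - 2 * ?r * ?q + ?s\<^sup>2) - 2 * c * ?r\<^sup>2 * ?s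
      + c * (c * (real n - 1)) * ?r\<^sup>2"
    unfolding D_def P_def frob_inner_compress_self[OF sym] frob_inner_compress_mat[OF sym]
      frob_inner_compress_perp_proj[where B = B, OF tr] frob_inner_perp_proj_self
    by (simp add: power2_eq_square algebra_simps)
  also have "\<dots> = ?r\<^sup>2 * (?r\<^sup>2 * ?N - 2 * ?r * ?q + (?s\<^sup>2 - ?s * c))"
  proof -
    have "c * (real n - 1) = ?s" using n1 by (simp add: c_def)
    then show ?thesis by (simp add: algebra_simps)
  qed
  also have "?s\<^sup>2 - ?s * c = (real n - 2) / (real n - 1) * ?s\<^sup>2"
    using n1 by (simp add: c_def field_simps power2_eq_square)
  finally show ?thesis using r by (simp add: zero_le_mult_iff)
qed

lemma sym_traceless_mat_vec_norm_le:
  assumes sym: "\<And>i j. B i j = B j i" and tr: "(\<Sum>i<n. B i i) = 0" and n: "n \<ge> 2"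
  shows "dot n (mat_vec n B v) (mat_vec n B v) \<le> (real n - 1) / real n * dot n v v * frob_inner n B B"
    (is "?q \<le> _ * ?r * ?N")
proof (cases "?r = 0")
  case True
  then have "mat_vec n B v i = 0" if "i < n" for i
    using that by (simp add: dot_self_eq_0_iff mat_vec_def)
  then have "?q = 0" by (simp add: dot_def)
  with True show ?thesis by simp
next
  case False
  then have r: "?r > 0" using dot_self_nonneg[of n v] by simp
  have n1: "real n - 1 > 0" using n by simp
  have "2 * ?r * ?q \<le> ?r\<^sup>2 * ?N + (real n - 2) / (real n - 1) * (?r * ?q)"
    using sym_traceless_mat_vec_ineq[of B n v, OF sym tr n] dot_Cauchy_Schwarz[of n v "mat_vec n B v"]
      mult_left_mono[of "(dot n v (mat_vec n B v))\<^sup>2" "?r * ?q" "(real n - 2) / (real n - 1)"] n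
    by simp
  then have "real n / (real n - 1) * (?r * ?q) \<le> ?r * (?r * ?N)"
    using n1 by (simp add: field_simps power2_eq_square)
  then have "?r * ?q \<le> ?r * ((real n - 1) / real n * ?r * ?N)"
    using n1 n by (simp add: field_simps)
  then show ?thesis using r by (rule mult_left_le_imp_le)
qed

lemma sym_traceless_quad_form_sq_le:
  assumes sym: "\<And>i j. B i j = B j i" and tr: "(\<Sum>i<n. B i i) = 0" and n: "n \<ge> 2"
  shows "(dot n v (mat_vec n B v))\<^sup>2 \<le> (real n - 1) / real n * (dot n v v)\<^sup>2 * frob_inner n B B"
proof -
  have "(dot n v (mat_vec n B v))\<^sup>2 \<le> dot n v v * dot n (mat_vec n B v) (mat_vec n B v)"
    by (rule dot_Cauchy_Schwarz)
  also have "\<dots> \<le> dot n v v * ((real n - 1) / real n * dot n v v * frob_inner n B B)"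
    by (intro mult_left_mono sym_traceless_mat_vec_norm_le[of B n, OF sym tr n] dot_self_nonneg)
  finally show ?thesis by (simp add: power2_eq_square mult_ac)
qed

lemma vnorm2_eq_dot: "vnorm2 n v = dot n v v"
  by (simp add: vnorm2_def dot_def power2_eq_square)

lemma gauss_second_order_term:
  fixes A :: "nat \<Rightarrow> nat \<Rightarrow> real"
  assumes sym: "\<And>i j. A i j = A j i"
  shows "(\<Sum>j<n. \<Sum>i<n. \<Sum>k<n. v i * v k * A i k * A j j - (v i * A i j) * (v k * A k j))
     = (\<Sum>j<n. A j j) * dot n v (mat_vec n A v) - dot n (mat_vec n A v) (mat_vec n A v)"
proof -
  have Av: "(\<Sum>i<n. v i * A i j) = mat_vec n A v j" for j
    by (simp add: mat_vec_def sym[of _ j] mult.commute)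
  have "(\<Sum>j<n. \<Sum>i<n. \<Sum>k<n. v i * v k * A i k * A j j - (v i * A i j) * (v k * A k j))
      = (\<Sum>j<n. A j j * (\<Sum>i<n. \<Sum>k<n. v i * v k * A i k))
        - (\<Sum>j<n. (\<Sum>i<n. v i * A i j) * (\<Sum>k<n. v k * A k j))"
    by (simp add: sum_subtractf sum_distrib_left sum_product mult_ac)
  also have "\<dots> = (\<Sum>j<n. A j j) * (\<Sum>i<n. \<Sum>k<n. v i * v k * A i k)
      - dot n (mat_vec n A v) (mat_vec n A v)"
    by (simp add: Av dot_def sum_distrib_right)
  also have "(\<Sum>i<n. \<Sum>k<n. v i * v k * A i k) = dot n v (mat_vec n A v)"
    by (simp add: dot_def mat_vec_def sum_distrib_left mult_ac)
  finally show ?thesis .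
qed

lemma ricci_eq_gauss:
  fixes g :: "nat \<Rightarrow> nat \<Rightarrow> nat \<Rightarrow> real"
  assumes sym: "\<And>a i j. g a i j = g a j i"
  shows "ricci n p Kb g v = Kb * (real n - 1) * dot n v v
     + (\<Sum>a<p. meanCurv n g a * dot n v (mat_vec n (g a) v)
               - dot n (mat_vec n (g a) v) (mat_vec n (g a) v))"
proof -
  define F where "F a i j k = v i * v k * g a i k * g a j j - (v i * g a i j) * (v k * g a k j)" for a i j k
  have e: "v i * v k * riemGauss p Kb g i j k j = Kb * (if i = k then v i * v k else 0)
     - Kb * (if i = j \<and> k = j then v i * v k else 0) + (\<Sum>a<p. F a i j k)" for i j k
    by (simp add: riemGauss_def F_def algebra_simps sum_distrib_left sum_subtractf sym[of _ j k])
  have k1: "(\<Sum>k<n. Kb * (if i = k then v i * v k else 0)) = Kb * (v i * v i)" if "i < n" for i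
    using that by (simp add: if_distrib[of "(*) Kb"] cong: if_cong)
  have k2: "(\<Sum>k<n. Kb * (if i = j \<and> k = j then v i * v k else 0)) = Kb * (if i = j then v i * v j else 0)"
    if "j < n" for i j
    using that by (cases "i = j") (simp_all add: if_distrib[of "(*) Kb"] cong: if_cong)
  have i2: "(\<Sum>i<n. Kb * (if i = j then v i * v j else 0)) = Kb * (v j * v j)" if "j < n" for j
    using that by (simp add: if_distrib[of "(*) Kb"] cong: if_cong)
  have "ricci n p Kb g v = (\<Sum>j<n. \<Sum>i<n. Kb * (v i * v i)) - (\<Sum>j<n. Kb * (v j * v j))
      + (\<Sum>j<n. \<Sum>i<n. \<Sum>k<n. \<Sum>a<p. F a i j k)"
    unfolding ricci_def e by (simp add: sum.distrib sum_subtractf k1 k2 i2)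
  also have "\<dots> = Kb * (real n - 1) * dot n v v + (\<Sum>a<p. \<Sum>j<n. \<Sum>i<n. \<Sum>k<n. F a i j k)"
  proof -
    have "(\<Sum>j<n. \<Sum>i<n. Kb * (v i * v i)) - (\<Sum>j<n. Kb * (v j * v j))
        = Kb * (real n - 1) * dot n v v"
      by (simp add: dot_def sum_distrib_left[symmetric] algebra_simps)
    then show ?thesis by (simp add: sum.swap[of _ "{..<n}" "{..<p}"])
  qed
  finally show ?thesis
    unfolding F_def gauss_second_order_term[of "g _", OF sym] by (simp add: meanCurv_def)
qed

lemma traceless_sym:
  assumes "\<And>a i j. g a i j = g a j i"
  shows "traceless n g a i j = traceless n g a j i"
  by (simp add: traceless_def assms)

lemma trace_traceless_eq_0:
  assumes "n > 0"
  shows "(\<Sum>i<n. traceless n g a i i) = 0"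
  using assms by (simp add: traceless_def meanCurv_def sum_subtractf)

lemma mat_vec_traceless:
  assumes "i < n"
  shows "mat_vec n (g a) v i = mat_vec n (traceless n g a) v i + meanCurv n g a / real n * v i"
proof -
  have e: "g a i j * v j = traceless n g a i j * v j + (if i = j then meanCurv n g a / real n * v j else 0)"
    for j by (cases "i = j") (simp_all add: traceless_def algebra_simps)
  show ?thesis using assms by (simp add: mat_vec_def e sum.distrib)
qed

lemma normal_ricci_term_traceless:
  fixes g :: "nat \<Rightarrow> nat \<Rightarrow> nat \<Rightarrow> real" and a :: nat and v :: "nat \<Rightarrow> real"
  assumes n: "n > 0"
  defines "H \<equiv> meanCurv n g a" and "Bv \<equiv> mat_vec n (traceless n g a) v"
  shows "H * dot n v (mat_vec n (g a) v) - dot n (mat_vec n (g a) v) (mat_vec n (g a) v)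
     = (real n - 1) / (real n)\<^sup>2 * H\<^sup>2 * dot n v v + (real n - 2) / real n * H * dot n v Bv
       - dot n Bv Bv"
proof -
  define c where "c = H / real n"
  have Av: "mat_vec n (g a) v i = Bv i + c * v i" if "i < n" for i
    unfolding H_def Bv_def c_def by (rule mat_vec_traceless[OF that])
  have S: "dot n v (mat_vec n (g a) v) = dot n v Bv + c * dot n v v"
  proof -
    have "dot n v (mat_vec n (g a) v) = (\<Sum>i<n. v i * Bv i + c * (v i * v i))"
      unfolding dot_def by (intro sum.cong refl) (simp add: Av distrib_left mult.left_commute)
    then show ?thesis by (simp add: dot_def sum.distrib sum_distrib_left)
  qed
  have Q: "dot n (mat_vec n (g a) v) (mat_vec n (g a) v)
      = dot n Bv Bv + 2 * c * dot n v Bv + c\<^sup>2 * dot n v v"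
  proof -
    have "dot n (mat_vec n (g a) v) (mat_vec n (g a) v)
        = (\<Sum>i<n. Bv i * Bv i + 2 * c * (v i * Bv i) + c\<^sup>2 * (v i * v i))"
      unfolding dot_def by (intro sum.cong refl) (simp add: Av power2_eq_square algebra_simps)
    then show ?thesis by (simp add: dot_def sum.distrib sum_distrib_left)
  qed
  show ?thesis unfolding S Q c_def using n by (simp add: field_simps power2_eq_square)
qed

lemma pinching_radical_bounds:
  fixes d K z u A :: real
  assumes d: "d \<ge> 1" and K: "K \<ge> 0" and z: "z \<ge> 0"
    and u: "u = (d+1)*z + 2*K" and A: "A = sqrt (u\<^sup>2 + (2*d-2)*K\<^sup>2)"
  shows "A \<le> (d+1)*K + 2*d*z" and "u * A \<le> u\<^sup>2 + (d-1)*K\<^sup>2"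
proof -
  have "0 \<le> u\<^sup>2 + (2*d-2)*K\<^sup>2" using d by (intro add_nonneg_nonneg mult_nonneg_nonneg) auto
  hence A2: "A\<^sup>2 = u\<^sup>2 + (2*d-2)*K\<^sup>2" using A by simp
  have "d*d \<ge> 1*1" using d by (intro mult_mono) auto
  then have "0 \<le> (d*d-1)*(K*K) + 4*(d*d-1)*K*z + (3*d+1)*(d-1)*(z*z)"
    using d K z by (intro add_nonneg_nonneg mult_nonneg_nonneg) auto
  also have "\<dots> = ((d+1)*K + 2*d*z)\<^sup>2 - A\<^sup>2"
    unfolding A2 u by (simp add: power2_eq_square algebra_simps)
  finally have "A\<^sup>2 \<le> ((d+1)*K + 2*d*z)\<^sup>2" by simp
  moreover have "0 \<le> (d+1)*K + 2*d*z" using d K z by (intro add_nonneg_nonneg mult_nonneg_nonneg) auto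
  ultimately show "A \<le> (d+1)*K + 2*d*z" by (rule power2_le_imp_le)
  have "(u\<^sup>2 + (d-1)*K\<^sup>2)\<^sup>2 - (u*A)\<^sup>2 = ((d-1)*K\<^sup>2)\<^sup>2"
    unfolding power_mult_distrib A2 by (simp add: power2_eq_square algebra_simps)
  then have "(u*A)\<^sup>2 \<le> (u\<^sup>2 + (d-1)*K\<^sup>2)\<^sup>2" by (metis diff_ge_0_iff_ge zero_le_power2)
  moreover have "0 \<le> u\<^sup>2 + (d-1)*K\<^sup>2" using d by (intro add_nonneg_nonneg mult_nonneg_nonneg) auto
  ultimately show "u * A \<le> u\<^sup>2 + (d-1)*K\<^sup>2" by (rule power2_le_imp_le)
qed

lemma pinching_key_ineq:
  fixes d K z u A t :: real
  assumes d: "d \<ge> 1" and K: "K \<ge> 0" and z: "z \<ge> 0"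
    and u: "u = (d+1)*z + 2*K" and A: "A = sqrt (u\<^sup>2 + (2*d-2)*K\<^sup>2)"
    and t: "t \<ge> 0" "t\<^sup>2 = (d-1)\<^sup>2 * z" and Az: "A - d*z \<ge> 0"
  shows "t * sqrt (A - d*z) \<le> (d+1)*K + 2*d*z - A"
proof -
  define L where "L = (d+1)*K + 2*d*z - A"
  have "0 \<le> u\<^sup>2 + (2*d-2)*K\<^sup>2" using d by (intro add_nonneg_nonneg mult_nonneg_nonneg) auto
  hence A2: "A\<^sup>2 = u\<^sup>2 + (2*d-2)*K\<^sup>2" using A by simp
  have "L\<^sup>2 = ((d+1)*K + 2*(d*z))\<^sup>2 - 2*((d+1)*K + 2*(d*z))*A + (u\<^sup>2 + (2*d-2) * K\<^sup>2)"
    unfolding A2[symmetric] L_def by (simp add: power2_eq_square algebra_simps)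
  then have "L\<^sup>2 - (d-1)\<^sup>2 * z * (A - d*z) = (d+1) * (u\<^sup>2 + (d-1)*K\<^sup>2 - u*A)"
    unfolding u by (simp add: power2_eq_square algebra_simps)
  moreover have "0 \<le> (d+1) * (u\<^sup>2 + (d-1)*K\<^sup>2 - u*A)"
    using pinching_radical_bounds(2)[OF d K z u A] d by simp
  moreover have "(t * sqrt (A - d*z))\<^sup>2 = (d-1)\<^sup>2 * z * (A - d*z)"
    unfolding power_mult_distrib t(2) using Az by simp
  ultimately have "(t * sqrt (A - d*z))\<^sup>2 \<le> L\<^sup>2" by linarith
  moreover have "L \<ge> 0" using pinching_radical_bounds(1)[OF d K z u A] by (simp add: L_def)
  ultimately show ?thesis unfolding L_def by (rule power2_le_imp_le)
qed

lemma pinching_ineq_normalized: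
  fixes d K z A u t Y E :: real
  assumes d: "d \<ge> 1" and K: "K \<ge> 0" and z: "z \<ge> 0" and Y: "Y \<ge> 0" and E: "E > 0"
    and u: "u = (d+1)*z + 2*K" and A: "A = sqrt (u\<^sup>2 + (2*d-2)*K\<^sup>2)"
    and t: "t \<ge> 0" "t\<^sup>2 = (d-1)\<^sup>2 * z"
    and pinch: "Y < A - d*z - E"
  shows "E \<le> (d+1)*K + d*z - t * sqrt Y - Y"
proof -
  have "sqrt Y \<le> sqrt (A - d*z)" using pinch E by (intro real_sqrt_le_mono) linarith
  then have "t * sqrt Y \<le> t * sqrt (A - d*z)" using t(1) by (rule mult_left_mono)
  moreover have "t * sqrt (A - d*z) \<le> (d+1)*K + 2*d*z - A"
    using pinching_key_ineq[OF d K z u A t] pinch Y E by simp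
  ultimately show ?thesis using pinch by linarith
qed

lemma pinching_ineq:
  fixes n :: nat and K \<epsilon> X Y :: real
  assumes n: "n \<ge> 4" and K: "K > 0" and e: "\<epsilon> > 0" and X: "X \<ge> 0" and Y: "Y \<ge> 0"
    and pinch: "Y < aoFun n K X - \<epsilon> * omegaFun n K X"
  shows "\<epsilon> * omegaFun n K X \<le> real n * K + X / real n
           - (real n - 2) / (real n - 1) * sqrt ((real n - 1) / real n) * sqrt X * sqrt Y - Y"
proof -
  define d where "d = real n - 1"
  have d3: "d \<ge> 3" using n unfolding d_def by simp
  have nd: "real n = d + 1" unfolding d_def by simp
  define z where "z = X / (d * (d+1))"
  have z0: "z \<ge> 0" using X d3 unfolding z_def by simp
  have Xz: "X = d * (d+1) * z" using d3 unfolding z_def by simp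
  have X1: "X / real n = d * z" and X2: "X / (real n - 1) = (d+1) * z"
    using d3 unfolding Xz nd by (simp_all add: field_simps)
  define u where "u = (d+1)*z + 2*K"
  define A where "A = sqrt (u\<^sup>2 + (2*d-2)*K\<^sup>2)"
  have ao: "aoFun n K X = A - d*z"
    unfolding aoFun_def aFun_def A_def u_def X1 X2 by (simp add: nd algebra_simps)
  define t where "t = (real n - 2) / (real n - 1) * sqrt ((real n - 1) / real n) * sqrt X"
  have t0: "t \<ge> 0" unfolding t_def using n X by simp
  have t2: "t\<^sup>2 = (d-1)\<^sup>2 * z"
  proof -
    have "t\<^sup>2 = ((real n - 2) / (real n - 1))\<^sup>2 * ((real n - 1) / real n) * X"
      unfolding t_def power_mult_distrib using n X by simp
    also have "\<dots> = (d-1)\<^sup>2 * z"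
    proof -
      have p: "d*d + d*(d*d) > 0" using d3 by (simp add: add_pos_pos)
      show ?thesis unfolding nd Xz using d3 p by (simp add: field_simps power2_eq_square)
    qed
    finally show ?thesis .
  qed
  have om: "omegaFun n K X > 0" unfolding omegaFun_def X2 using d3 K z0 nd
    by (intro add_nonneg_pos mult_nonneg_nonneg mult_pos_pos) auto
  have "\<epsilon> * omegaFun n K X \<le> (d+1)*K + d*z - t * sqrt Y - Y"
    using pinching_ineq_normalized[OF _ _ z0 Y _ u_def A_def t0 t2] d3 K pinch om e unfolding ao by simp
  thus ?thesis unfolding t_def X1 nd[symmetric] by (simp add: mult.assoc)
qed

lemma ricci_bound_arith:
  fixes m K r X Y SH S2 Q E :: real
  assumes m: "m \<ge> 2" and r: "r \<ge> 0" and X: "X \<ge> 0" and Y: "Y \<ge> 0"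
    and S2: "S2 \<le> (m-1)/m * r\<^sup>2 * Y" and SH: "SH \<ge> - (sqrt X * sqrt S2)"
    and Q: "Q \<le> (m-1)/m * r * Y"
    and E: "E \<le> m*K + X/m - (m-2)/(m-1) * sqrt((m-1)/m) * sqrt X * sqrt Y - Y"
  shows "(m-1)/m * E * r \<le> K*(m-1)*r + (m-1)/m\<^sup>2 * X * r + (m-2)/m * SH - Q"
proof -
  define \<kappa> where "\<kappa> = sqrt((m-1)/m)"
  have "sqrt S2 \<le> sqrt ((m-1)/m * r\<^sup>2 * Y)" using S2 by (rule real_sqrt_le_mono)
  also have "\<dots> = sqrt ((m-1)/m) * sqrt (r\<^sup>2) * sqrt Y" by (simp only: real_sqrt_mult)
  also have "\<dots> = r * \<kappa> * sqrt Y" unfolding \<kappa>_def using r by simp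
  finally have "SH \<ge> - (sqrt X * (r * \<kappa> * sqrt Y))"
    using SH mult_left_mono[of "sqrt S2" _ "sqrt X"] X by fastforce
  then have SH': "(m-2)/m * SH \<ge> - ((m-2)/m * \<kappa> * r * sqrt X * sqrt Y)"
    using m by (smt (verit) mult_left_mono mult_minus_right divide_nonneg_pos mult.assoc mult.commute)
  have "(m-1)/m * E * r \<le> (m-1)/m * r * (m*K + X/m - (m-2)/(m-1) * \<kappa> * sqrt X * sqrt Y - Y)"
    using mult_left_mono[OF E, of "(m-1)/m * r"] m r unfolding \<kappa>_def by (simp add: mult_ac)
  also have "\<dots> = K*(m-1)*r + (m-1)/m\<^sup>2 * X * r - (m-2)/m * \<kappa> * r * sqrt X * sqrt Y
      - (m-1)/m * r * Y"
    using m by (simp add: field_simps power2_eq_square)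
  finally show ?thesis using SH' Q by linarith
qed

lemma ricci_ge_of_pinching:
  fixes g :: "nat \<Rightarrow> nat \<Rightarrow> nat \<Rightarrow> real"
  assumes n: "n \<ge> 4" and K: "Kb > 0" and e: "\<epsilon> > 0" and sym: "\<And>a i j. g a i j = g a j i"
    and pinch: "normAo2 n p g < aoFun n Kb (normH2 n p g) - \<epsilon> * omegaFun n Kb (normH2 n p g)"
  shows "ricci n p Kb g v \<ge> (real n - 1) / real n * \<epsilon> * omegaFun n Kb (normH2 n p g) * vnorm2 n v"
proof -
  define X Y r where "X = normH2 n p g" and "Y = normAo2 n p g" and "r = dot n v v"
  define H B where "H a = meanCurv n g a" and "B a = traceless n g a" for a
  define s q where "s a = dot n v (mat_vec n (B a) v)"
    and "q a = dot n (mat_vec n (B a) v) (mat_vec n (B a) v)" for a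
  define SH S2 Q where "SH = (\<Sum>a<p. H a * s a)" and "S2 = (\<Sum>a<p. (s a)\<^sup>2)" and "Q = (\<Sum>a<p. q a)"
  have X: "X = (\<Sum>a<p. (H a)\<^sup>2)" by (simp add: X_def H_def normH2_def)
  have Y: "Y = (\<Sum>a<p. frob_inner n (B a) (B a))"
    by (simp add: Y_def B_def normAo2_def frob_inner_def power2_eq_square)
  have X0: "X \<ge> 0" and Y0: "Y \<ge> 0" and r0: "r \<ge> 0"
    by (simp_all add: X Y r_def sum_nonneg frob_inner_self_nonneg dot_self_nonneg)
  have n2: "n \<ge> 2" and npos: "n > 0" using n by simp_all
  have Bsym: "\<And>i j. B a i j = B a j i" and Btr: "(\<Sum>i<n. B a i i) = 0" for a
    using traceless_sym[OF sym] trace_traceless_eq_0[OF npos] by (simp_all add: B_def)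
  have "ricci n p Kb g v = Kb * (real n - 1) * r
      + (\<Sum>a<p. (real n - 1) / (real n)\<^sup>2 * (H a)\<^sup>2 * r + (real n - 2) / real n * H a * s a - q a)"
    unfolding ricci_eq_gauss[OF sym] r_def H_def s_def q_def B_def
    by (simp add: normal_ricci_term_traceless[OF npos])
  then have ricci: "ricci n p Kb g v
      = Kb * (real n - 1) * r + (real n - 1) / (real n)\<^sup>2 * X * r + (real n - 2) / real n * SH - Q"
    unfolding X SH_def Q_def
    by (simp add: sum.distrib sum_subtractf sum_distrib_left sum_distrib_right sum_divide_distrib mult_ac)
  have "S2 \<le> (\<Sum>a<p. (real n - 1) / real n * r\<^sup>2 * frob_inner n (B a) (B a))"
    unfolding S2_def s_def r_def by (intro sum_mono sym_traceless_quad_form_sq_le Bsym Btr n2)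
  then have S2: "S2 \<le> (real n - 1) / real n * r\<^sup>2 * Y" by (simp add: Y sum_distrib_left)
  have "Q \<le> (\<Sum>a<p. (real n - 1) / real n * r * frob_inner n (B a) (B a))"
    unfolding Q_def q_def r_def by (intro sum_mono sym_traceless_mat_vec_norm_le Bsym Btr n2)
  then have Q: "Q \<le> (real n - 1) / real n * r * Y" by (simp add: Y sum_distrib_left)
  have "SH\<^sup>2 \<le> X * S2" unfolding SH_def X S2_def by (rule Cauchy_Schwarz_ineq_sum)
  then have "\<bar>SH\<bar> \<le> sqrt X * sqrt S2" by (metis real_sqrt_abs real_sqrt_le_mono real_sqrt_mult)
  then have SH: "SH \<ge> - (sqrt X * sqrt S2)" by linarith
  have "\<epsilon> * omegaFun n Kb X \<le> real n * Kb + X / real n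
      - (real n - 2) / (real n - 1) * sqrt ((real n - 1) / real n) * sqrt X * sqrt Y - Y"
    using pinching_ineq[OF n K e X0 Y0] pinch by (simp add: X_def Y_def)
  from ricci_bound_arith[OF _ r0 X0 Y0 S2 SH Q this] n
  show ?thesis by (simp add: ricci X_def r_def vnorm2_eq_dot mult_ac)
qed

theorem mainTheorem10:
  fixes n p :: nat and Kb \<epsilon> :: real
    and h :: "'m \<Rightarrow> nat \<Rightarrow> nat \<Rightarrow> nat \<Rightarrow> real"
  assumes "n \<ge> 4" and "Kb > 0" and "\<epsilon> > 0"
    and sym: "\<And>x a i j. h x a i j = h x a j i"
    and pinch: "\<And>x. normAo2 n p (h x)
                   < aoFun n Kb (normH2 n p (h x)) - \<epsilon> * omegaFun n Kb (normH2 n p (h x))"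
  shows "\<forall>x. (\<forall>v. ricci n p Kb (h x) v
                   \<ge> (real n - 1) / real n * \<epsilon> * omegaFun n Kb (normH2 n p (h x)) * vnorm2 n v)
          \<and> (real n - 1) / real n * \<epsilon> * omegaFun n Kb (normH2 n p (h x))
              > \<epsilon> / real n * normH2 n p (h x)"
proof (intro allI conjI)
  fix x v
  show "ricci n p Kb (h x) v
      \<ge> (real n - 1) / real n * \<epsilon> * omegaFun n Kb (normH2 n p (h x)) * vnorm2 n v"
    using assms by (intro ricci_ge_of_pinching) auto
  have "(real n - 1) / real n * \<epsilon> * omegaFun n Kb (normH2 n p (h x))
      = \<epsilon> / real n * normH2 n p (h x) + 2 * (real n - 1) * \<epsilon> * Kb"
    using \<open>n \<ge> 4\<close> by (simp add: omegaFun_def field_simps)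
  then show "(real n - 1) / real n * \<epsilon> * omegaFun n Kb (normH2 n p (h x))
      > \<epsilon> / real n * normH2 n p (h x)"
    using assms(1-3) by simp
qed

end
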